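(* Let $\phi:V\to V$ be a continuous coherency preserver that is not degenerate, with $\phi(0)=0$, $\varphi_0$ nonconstant, and $0$ generic. Then the map $\varphi_0:\mathcal{Q}\to\mathcal{Q}$ is a homeomorphism.
   Context: Fix an integer $n\ge4$, let $V=\mathbb{R}^n$ with its standard topology and $q(x_1,\dots,x_n)=x_n^2-\sum_{k=1}^{n-1}x_k^2$. Points $x,y$ are coherent when $q(x-y)=0$; $\mathcal{C}(a)=\{m: q(m-a)=0\}$. A coherency preserver is a map $\phi:V\to V$ with $q(b-a)=0\Rightarrow q(\phi(b)-\phi(a))=0$; it is degenerate when its range is included in some $\mathcal{C}(c)$. Let $\mathcal{Q}=\{(x_1,\dots,x_{n-1},1): \sum_{k=1}^{n-1}x_k^2=1\}$ with the subspace topology. For a non-degenerate continuous coherency preserver $\phi$, for every $a\in V$ and $p\in\mathcal{Q}$ there is a unique $p'\in\mathcal{Q}$ with $\phi(a+\mathbb{R}p)\subset\phi(a)+\mathbb{R}p'$; one sets $\varphi_a(p):=p'$. Let $\mathcal{W}$ be the set of points $b\in V$ such that $\phi^{-1}(\{b\})$ has nonempty interior in $V$; a point $a$ is generic if $\phi(a)\notin\mathcal{W}$. *)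

theory Defs
  imports "HOL-Analysis.Analysis"
begin

text \<open>V = R^n is modelled as real^'n::{finite,linorder} with a finite, linearly ordered index type;
  the distinguished (time) coordinate x_n is the largest index.\<close>

definition tidx :: "'n::{finite,linorder}" where
  "tidx = Max (UNIV :: 'n set)"

definition qf :: "real^'n::{finite,linorder} \<Rightarrow> real" where
  "qf x = (x $ tidx)^2 - (\<Sum>k\<in>UNIV - {tidx}. (x $ k)^2)"

definition coherent :: "real^'n::{finite,linorder} \<Rightarrow> real^'n::{finite,linorder} \<Rightarrow> bool" where
  "coherent x y \<longleftrightarrow> qf (x - y) = 0"

definition lightcone :: "real^'n::{finite,linorder} \<Rightarrow> (real^'n::{finite,linorder}) set" where
  "lightcone a = {m. qf (m - a) = 0}"

definition coherency_preserver :: "(real^'n::{finite,linorder} \<Rightarrow> real^'n::{finite,linorder}) \<Rightarrow> bool" where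
  "coherency_preserver \<phi> \<longleftrightarrow> (\<forall>a b. qf (b - a) = 0 \<longrightarrow> qf (\<phi> b - \<phi> a) = 0)"

definition degenerate :: "(real^'n::{finite,linorder} \<Rightarrow> real^'n::{finite,linorder}) \<Rightarrow> bool" where
  "degenerate \<phi> \<longleftrightarrow> (\<exists>c. range \<phi> \<subseteq> lightcone c)"

definition Qset :: "(real^'n::{finite,linorder}) set" where
  "Qset = {x. x $ tidx = 1 \<and> (\<Sum>k\<in>UNIV - {tidx}. (x $ k)^2) = 1}"

definition varphi :: "(real^'n::{finite,linorder} \<Rightarrow> real^'n::{finite,linorder}) \<Rightarrow> real^'n::{finite,linorder} \<Rightarrow> real^'n::{finite,linorder} \<Rightarrow> real^'n::{finite,linorder}" where
  "varphi \<phi> a p = (THE p'. p' \<in> Qset \<and> (\<forall>t::real. \<exists>s::real. \<phi> (a + t *\<^sub>R p) = \<phi> a + s *\<^sub>R p'))"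

definition Wset :: "(real^'n::{finite,linorder} \<Rightarrow> real^'n::{finite,linorder}) \<Rightarrow> (real^'n::{finite,linorder}) set" where
  "Wset \<phi> = {b. interior (\<phi> -` {b}) \<noteq> {}}"

definition generic :: "(real^'n::{finite,linorder} \<Rightarrow> real^'n::{finite,linorder}) \<Rightarrow> real^'n::{finite,linorder} \<Rightarrow> bool" where
  "generic \<phi> a \<longleftrightarrow> \<phi> a \<notin> Wset \<phi>"

end

theory Submission
  imports Defs
begin

text \<open>
  On a ray \<open>\<real>p\<close> (\<open>p \<in> Q\<close>) the preserver \<open>\<phi>\<close> takes values on the null line through
  \<open>\<phi>\<^sub>0(p)\<close>, say \<open>\<phi>(tp) = h\<^sub>p(t) \<phi>\<^sub>0(p)\<close>, and every point \<open>z\<close> is coherent with exactly one point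
  \<open>\<tau>\<^sub>p(z) p\<close> of the ray, so \<open>\<phi>(z)\<close> is coherent with \<open>h\<^sub>p(\<tau>\<^sub>p(z)) \<phi>\<^sub>0(p)\<close>
  (\<open>h\<^sub>p\<close> and \<open>\<tau>\<^sub>p\<close> are \<open>ray_scale p\<close> and \<open>ray_param p\<close> below).
  If \<open>\<phi>\<^sub>0(p\<^sub>1) = \<phi>\<^sub>0(p\<^sub>2) = r\<close> with \<open>p\<^sub>1 \<noteq> p\<^sub>2\<close>, pick \<open>p\<^sub>3\<close> with \<open>\<phi>\<^sub>0(p\<^sub>3) = s \<noteq> r\<close>. In dimension at
  least 4 the three parameters \<open>\<tau>\<^sub>p\<^sub>i(z)\<close> can be prescribed at a single point \<open>z\<close>; if
  \<open>h\<^sub>p\<^sub>1(\<alpha>) \<noteq> h\<^sub>p\<^sub>2(\<beta>)\<close> there, then on a whole neighbourhood \<open>\<phi>(z)\<close> is coherent with two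
  distinct points of the line \<open>\<real>r\<close> and with a nonzero point of \<open>\<real>s\<close>, which forces \<open>\<phi>(z) = 0\<close>,
  contradicting genericity of \<open>0\<close>. Hence \<open>h\<^sub>p\<^sub>1\<close> is constant, and by continuity zero, which is
  impossible. So \<open>\<phi>\<^sub>0\<close> is a continuous injective self-map of the sphere \<open>Q\<close>, hence onto by
  invariance of domain, and a homeomorphism by compactness.
\<close>

definition time_axis :: "real^'n::{finite,linorder}" where
  "time_axis = axis tidx 1"

definition spatial :: "real^'n::{finite,linorder} \<Rightarrow> real^'n::{finite,linorder}" where
  "spatial x = x - (x $ tidx) *\<^sub>R time_axis"

definition minkowski :: "real^'n::{finite,linorder} \<Rightarrow> real^'n::{finite,linorder} \<Rightarrow> real" where
  "minkowski x y = x $ tidx * y $ tidx - spatial x \<bullet> spatial y"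

lemma spatial_nth: "spatial x $ k = (if k = tidx then 0 else x $ k)"
  by (simp add: spatial_def time_axis_def axis_def)

lemma spatial_tidx [simp]: "spatial x $ tidx = 0"
  by (simp add: spatial_nth)

lemma time_axis_tidx [simp]: "(time_axis :: real^'n::{finite,linorder}) $ tidx = 1"
  by (simp add: time_axis_def)

lemma inner_time_axis: "x \<bullet> (time_axis :: real^'n::{finite,linorder}) = x $ tidx"
  by (simp add: time_axis_def inner_axis)

lemma spatial_decomp: "x = spatial x + (x $ tidx) *\<^sub>R time_axis"
  by (simp add: spatial_def)

lemma spatial_add: "spatial (x + y) = spatial x + spatial y"
  and spatial_diff: "spatial (x - y) = spatial x - spatial y"
  and spatial_scaleR: "spatial (c *\<^sub>R x) = c *\<^sub>R spatial x"
  by (simp_all add: spatial_def algebra_simps)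

lemma spatial_add_time_axis: "v $ tidx = 0 \<Longrightarrow> spatial (v + c *\<^sub>R time_axis) = v"
  by (simp add: spatial_add spatial_scaleR) (simp add: spatial_def)

lemma inner_spatial: "spatial x \<bullet> spatial y = (\<Sum>k\<in>UNIV - {tidx}. x $ k * y $ k)"
proof -
  have "spatial x \<bullet> spatial y = (\<Sum>k\<in>UNIV. spatial x $ k * spatial y $ k)"
    by (simp add: inner_vec_def)
  also have "\<dots> = (\<Sum>k\<in>UNIV - {tidx}. spatial x $ k * spatial y $ k)"
    by (rule sum.mono_neutral_right) auto
  also have "\<dots> = (\<Sum>k\<in>UNIV - {tidx}. x $ k * y $ k)"
    by (rule sum.cong) (auto simp: spatial_nth)
  finally show ?thesis .
qed

lemma qf_eq_minkowski: "qf x = minkowski x x"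
  by (simp add: qf_def minkowski_def inner_spatial power2_eq_square)

lemma minkowski_commute: "minkowski x y = minkowski y x"
  by (simp add: minkowski_def inner_commute mult.commute)

lemma minkowski_add_left: "minkowski (x + y) z = minkowski x z + minkowski y z"
  and minkowski_add_right: "minkowski z (x + y) = minkowski z x + minkowski z y"
  and minkowski_diff_left: "minkowski (x - y) z = minkowski x z - minkowski y z"
  and minkowski_diff_right: "minkowski z (x - y) = minkowski z x - minkowski z y"
  and minkowski_scaleR_left: "minkowski (c *\<^sub>R x) z = c * minkowski x z"
  and minkowski_scaleR_right: "minkowski z (c *\<^sub>R x) = c * minkowski z x"
  by (simp_all add: minkowski_def spatial_add spatial_diff spatial_scaleR
      inner_add_left inner_add_right inner_diff_left inner_diff_right algebra_simps)

lemma qf_diff: "qf (x - y) = qf x - 2 * minkowski x y + qf y"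
  by (simp add: qf_eq_minkowski minkowski_diff_left minkowski_diff_right minkowski_commute[of y x])

lemma qf_add: "qf (x + y) = qf x + 2 * minkowski x y + qf y"
  by (simp add: qf_eq_minkowski minkowski_add_left minkowski_add_right minkowski_commute[of y x])

lemma qf_scaleR: "qf (c *\<^sub>R x) = c\<^sup>2 * qf x"
  by (simp add: qf_eq_minkowski minkowski_scaleR_left minkowski_scaleR_right power2_eq_square)

lemma isCont_minkowski [continuous_intros]:
  fixes f g :: "'a::t2_space \<Rightarrow> real^'n::{finite,linorder}"
  shows "isCont f a \<Longrightarrow> isCont g a \<Longrightarrow> isCont (\<lambda>x. minkowski (f x) (g x)) a"
  unfolding minkowski_def spatial_def by (intro continuous_intros)

lemma isCont_qf [continuous_intros]:
  fixes f :: "'a::t2_space \<Rightarrow> real^'n::{finite,linorder}"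
  shows "isCont f a \<Longrightarrow> isCont (\<lambda>x. qf (f x)) a"
  unfolding qf_eq_minkowski by (intro continuous_intros)

lemma Qset_iff: "p \<in> Qset \<longleftrightarrow> p $ tidx = 1 \<and> spatial p \<bullet> spatial p = 1"
  by (simp add: Qset_def inner_spatial power2_eq_square)

lemma Qset_decomp: "p \<in> Qset \<Longrightarrow> p = spatial p + time_axis"
  using spatial_decomp[of p] by (simp add: Qset_iff)

lemma qf_Qset: "p \<in> Qset \<Longrightarrow> qf p = 0"
  by (simp add: Qset_iff qf_eq_minkowski minkowski_def)

lemma Qset_if_qf_eq_0: "qf x = 0 \<Longrightarrow> x $ tidx = 1 \<Longrightarrow> x \<in> Qset"
  by (simp add: Qset_iff qf_eq_minkowski minkowski_def)

lemma minkowski_add_time_axis_Qset: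
  "v $ tidx = 0 \<Longrightarrow> p \<in> Qset \<Longrightarrow> minkowski (v + c *\<^sub>R time_axis) p = c - v \<bullet> spatial p"
  by (simp add: minkowski_def spatial_add_time_axis Qset_iff)

lemma minkowski_time_axis_left: "minkowski time_axis p = p $ tidx"
  by (simp add: minkowski_def spatial_def)

lemma null_orthogonal_parallel:
  assumes "qf u = 0" "qf v = 0" "minkowski u v = 0"
  shows "v $ tidx *\<^sub>R u = u $ tidx *\<^sub>R v"
proof -
  define a b U V where "a = u $ tidx" "b = v $ tidx" "U = spatial u" "V = spatial v"
  have UU: "U \<bullet> U = a * a" and VV: "V \<bullet> V = b * b" and UV: "U \<bullet> V = a * b"
    using assms by (auto simp: qf_eq_minkowski minkowski_def a_b_U_V_def)
  have "(b *\<^sub>R U - a *\<^sub>R V) \<bullet> (b *\<^sub>R U - a *\<^sub>R V) = b*b*(U \<bullet> U) - 2*a*b*(U \<bullet> V) + a*a*(V \<bullet> V)"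
    by (simp add: inner_diff_left inner_diff_right inner_commute algebra_simps)
  also have "\<dots> = 0"
    by (simp add: UU VV UV algebra_simps)
  finally have "b *\<^sub>R U = a *\<^sub>R V"
    by simp
  then have "b *\<^sub>R (U + a *\<^sub>R time_axis) = a *\<^sub>R (V + b *\<^sub>R time_axis)"
    by (simp add: algebra_simps)
  then show ?thesis
    using spatial_decomp[of u] spatial_decomp[of v] by (simp add: a_b_U_V_def)
qed

lemma null_tidx_nonzero:
  assumes "qf u = 0" "u \<noteq> 0"
  shows "u $ tidx \<noteq> 0"
proof
  assume u0: "u $ tidx = 0"
  then have "spatial u = 0"
    using assms by (simp add: qf_eq_minkowski minkowski_def)
  then show False
    using spatial_decomp[of u] u0 assms by simp
qed

lemma Qset_minkowski_eq_0_imp_eq: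
  assumes "r \<in> Qset" "s \<in> Qset" "minkowski r s = 0"
  shows "r = s"
  using null_orthogonal_parallel[OF qf_Qset[OF assms(1)] qf_Qset[OF assms(2)] assms(3)] assms
  by (simp add: Qset_iff)

lemma coherent_null_lines_eq_0:
  assumes r: "r \<in> Qset" and s: "s \<in> Qset" and "r \<noteq> s" "a \<noteq> b" "c \<noteq> 0"
    and ya: "qf (y - a *\<^sub>R r) = 0" and yb: "qf (y - b *\<^sub>R r) = 0" and yc: "qf (y - c *\<^sub>R s) = 0"
  shows "y = 0"
proof -
  have qr: "qf r = 0" and qs: "qf s = 0"
    using r s by (simp_all add: qf_Qset)
  have "qf y = 2 * a * minkowski y r" "qf y = 2 * b * minkowski y r"
    using ya yb qr by (simp_all add: qf_diff qf_scaleR minkowski_scaleR_right)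
  then have yr: "minkowski y r = 0" and qy: "qf y = 0"
    using \<open>a \<noteq> b\<close> by simp_all
  have "y $ tidx *\<^sub>R r = r $ tidx *\<^sub>R y"
    using null_orthogonal_parallel[OF qr qy] yr by (simp add: minkowski_commute)
  then have y: "y = y $ tidx *\<^sub>R r"
    using r by (simp add: Qset_iff)
  have "minkowski r s \<noteq> 0"
    using Qset_minkowski_eq_0_imp_eq[OF r s] \<open>r \<noteq> s\<close> by blast
  moreover have "qf (y - c *\<^sub>R s) = - 2 * c * (y $ tidx) * minkowski r s"
    by (subst y) (simp add: qf_diff qf_scaleR minkowski_scaleR_left minkowski_scaleR_right qr qs)
  ultimately have "y $ tidx = 0"
    using yc \<open>c \<noteq> 0\<close> by simp
  then show ?thesis
    using y by simp
qed

lemma unit_vectors_collinear: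
  fixes x y z :: "'a::real_inner"
  assumes "x \<bullet> x = 1" "y \<bullet> y = 1" "z \<bullet> z = 1" "x \<noteq> y" "z - x = c *\<^sub>R (y - x)"
  shows "z = x \<or> z = y"
proof -
  have z: "z = x + c *\<^sub>R (y - x)"
    using assms(5) by (simp add: algebra_simps)
  have "(x - y) \<bullet> (x - y) = 2 - 2 * (x \<bullet> y)"
    using assms(1,2) by (simp add: inner_diff_left inner_diff_right inner_commute[of y x])
  then have k: "2 - 2 * (x \<bullet> y) \<noteq> 0"
    using assms(4) by auto
  have "z \<bullet> z = x \<bullet> x + 2 * c * (x \<bullet> y - x \<bullet> x) + c\<^sup>2 * (x \<bullet> x - 2 * (x \<bullet> y) + y \<bullet> y)"
    unfolding z by (simp add: inner_add_left inner_add_right inner_diff_left inner_diff_right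
        inner_commute[of y x] power2_eq_square algebra_simps)
  then have "c * (c - 1) * (2 - 2 * (x \<bullet> y)) = 0"
    using assms(1-3) by (simp add: algebra_simps power2_eq_square)
  then have "c = 0 \<or> c = 1"
    using k by simp
  then show ?thesis
    using z by auto
qed

lemma exists_in_span_inner_eq:
  fixes d2 d3 :: "'a::real_inner"
  assumes n2: "\<And>c. d2 \<noteq> c *\<^sub>R d3" and n3: "\<And>c. d3 \<noteq> c *\<^sub>R d2"
  shows "\<exists>v \<in> span {d2, d3}. v \<bullet> d2 = m2 \<and> v \<bullet> d3 = m3"
proof -
  have "d2 \<noteq> 0" "d3 \<noteq> 0"
    using n2[of 0] n3[of 0] by simp_all
  define e2 where "e2 = d2 - ((d2 \<bullet> d3) / (d3 \<bullet> d3)) *\<^sub>R d3"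
  define e3 where "e3 = d3 - ((d3 \<bullet> d2) / (d2 \<bullet> d2)) *\<^sub>R d2"
  have "e2 \<noteq> 0" "e3 \<noteq> 0"
    using n2[of "(d2 \<bullet> d3) / (d3 \<bullet> d3)"] n3[of "(d3 \<bullet> d2) / (d2 \<bullet> d2)"] by (auto simp: e2_def e3_def)
  have o23: "e2 \<bullet> d3 = 0" and o32: "e3 \<bullet> d2 = 0"
    using \<open>d2 \<noteq> 0\<close> \<open>d3 \<noteq> 0\<close> by (simp_all add: e2_def e3_def inner_diff_left)
  have "d2 - e2 = ((d2 \<bullet> d3) / (d3 \<bullet> d3)) *\<^sub>R d3" "d3 - e3 = ((d3 \<bullet> d2) / (d2 \<bullet> d2)) *\<^sub>R d2"
    by (simp_all add: e2_def e3_def)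
  then have "e2 \<bullet> (d2 - e2) = 0" "e3 \<bullet> (d3 - e3) = 0"
    by (simp_all only: inner_scaleR_right o23 o32 mult_zero_right)
  then have s2: "e2 \<bullet> d2 = e2 \<bullet> e2" and s3: "e3 \<bullet> d3 = e3 \<bullet> e3"
    by (simp_all add: inner_diff_right)
  define v where "v = (m2 / (e2 \<bullet> e2)) *\<^sub>R e2 + (m3 / (e3 \<bullet> e3)) *\<^sub>R e3"
  have "v \<bullet> d2 = m2" "v \<bullet> d3 = m3"
    using \<open>e2 \<noteq> 0\<close> \<open>e3 \<noteq> 0\<close> by (simp_all add: v_def inner_add_left o23 o32 s2 s3)
  moreover have "v \<in> span {d2, d3}"
    unfolding v_def e2_def e3_def by (intro span_add span_scale span_diff span_base) auto
  ultimately show ?thesis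
    by blast
qed

lemma exists_minkowski_eq:
  fixes p1 p2 p3 :: "real^'n::{finite,linorder}"
  assumes Q: "p1 \<in> Qset" "p2 \<in> Qset" "p3 \<in> Qset" and ne: "p1 \<noteq> p2" "p1 \<noteq> p3" "p2 \<noteq> p3"
  shows "\<exists>y. minkowski y p1 = l1 \<and> minkowski y p2 = l2 \<and> minkowski y p3 = l3"
proof -
  define u1 u2 u3 where "u1 = spatial p1" "u2 = spatial p2" "u3 = spatial p3"
  have uu: "u1 \<bullet> u1 = 1" "u2 \<bullet> u2 = 1" "u3 \<bullet> u3 = 1"
    using Q by (auto simp: Qset_iff u1_u2_u3_def)
  have une: "u1 \<noteq> u2" "u1 \<noteq> u3" "u2 \<noteq> u3"
    using ne Qset_decomp[OF Q(1)] Qset_decomp[OF Q(2)] Qset_decomp[OF Q(3)]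
    by (auto simp: u1_u2_u3_def)
  define d2 d3 where "d2 = u2 - u1" "d3 = u3 - u1"
  have "d2 \<noteq> c *\<^sub>R d3" for c
    using unit_vectors_collinear[OF uu(1) uu(3) uu(2) une(2), of c] une by (auto simp: d2_d3_def)
  moreover have "d3 \<noteq> c *\<^sub>R d2" for c
    using unit_vectors_collinear[OF uu(1) uu(2) uu(3) une(1), of c] une by (auto simp: d2_d3_def)
  ultimately obtain v where v: "v \<in> span {d2, d3}" "v \<bullet> d2 = l1 - l2" "v \<bullet> d3 = l1 - l3"
    using exists_in_span_inner_eq by blast
  have "orthogonal time_axis v"
    by (rule orthogonal_to_span[OF v(1)])
      (auto simp: d2_d3_def u1_u2_u3_def orthogonal_def inner_commute[of time_axis] inner_time_axis)
  then have vt: "v $ tidx = 0"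
    by (simp add: orthogonal_def inner_commute[of time_axis] inner_time_axis)
  define y where "y = v + (l1 + v \<bullet> u1) *\<^sub>R time_axis"
  have "minkowski y p1 = l1" "minkowski y p2 = l2" "minkowski y p3 = l3"
    using v(2,3) minkowski_add_time_axis_Qset[OF vt Q(1)] minkowski_add_time_axis_Qset[OF vt Q(2)]
      minkowski_add_time_axis_Qset[OF vt Q(3)]
    by (simp_all add: y_def u1_u2_u3_def d2_d3_def inner_diff_right)
  then show ?thesis
    by blast
qed

text \<open>This is where the dimension bound enters: \<open>w\<close> is built from a nonzero vector orthogonal
  to \<open>time_axis\<close>, \<open>u\<^sub>2 - u\<^sub>1\<close> and \<open>u\<^sub>3 - u\<^sub>1\<close>.\<close>

lemma exists_minkowski_orthogonal_non_null:
  fixes p1 p2 p3 :: "real^'n::{finite,linorder}"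
  assumes n4: "CARD('n) \<ge> 4" and Q: "p1 \<in> Qset" "p2 \<in> Qset" "p3 \<in> Qset" and "p1 \<noteq> p2"
  shows "\<exists>w. minkowski w p1 = 0 \<and> minkowski w p2 = 0 \<and> minkowski w p3 = 0 \<and> qf w \<noteq> 0"
proof -
  define u1 u2 u3 where "u1 = spatial p1" "u2 = spatial p2" "u3 = spatial p3"
  have uu: "u1 \<bullet> u1 = 1" "u2 \<bullet> u2 = 1"
    using Q by (auto simp: Qset_iff u1_u2_u3_def)
  have "u1 \<noteq> u2"
    using \<open>p1 \<noteq> p2\<close> Qset_decomp[OF Q(1)] Qset_decomp[OF Q(2)] by (auto simp: u1_u2_u3_def)
  have "dim {time_axis, u2 - u1, u3 - u1} \<le> card {time_axis, u2 - u1, u3 - u1}"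
    by (rule dim_le_card') simp
  also have "\<dots> \<le> 3"
    by (simp add: card_insert_if)
  finally have "dim {time_axis, u2 - u1, u3 - u1} < DIM(real^'n::{finite,linorder})"
    using n4 by simp
  then obtain w' where "w' \<noteq> 0" and w': "\<And>y. y \<in> span {time_axis, u2 - u1, u3 - u1} \<Longrightarrow> orthogonal w' y"
    using orthogonal_to_subspace_exists by metis
  have "orthogonal w' time_axis" "orthogonal w' (u2 - u1)" "orthogonal w' (u3 - u1)"
    by (simp_all add: w' span_base)
  then have w't: "w' $ tidx = 0" and w'u: "w' \<bullet> u2 = w' \<bullet> u1" "w' \<bullet> u3 = w' \<bullet> u1"
    by (simp_all add: orthogonal_def inner_time_axis inner_diff_right)
  define c where "c = w' \<bullet> u1"
  define w where "w = w' + c *\<^sub>R time_axis"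
  have "minkowski w p1 = 0" "minkowski w p2 = 0" "minkowski w p3 = 0"
    using w'u minkowski_add_time_axis_Qset[OF w't Q(1)] minkowski_add_time_axis_Qset[OF w't Q(2)]
      minkowski_add_time_axis_Qset[OF w't Q(3)]
    by (simp_all add: w_def c_def u1_u2_u3_def)
  moreover have "qf w \<noteq> 0"
  proof
    assume "qf w = 0"
    then have cc: "c * c = w' \<bullet> w'"
      using w't by (simp add: qf_eq_minkowski minkowski_def w_def spatial_add_time_axis)
    have "(w' - c *\<^sub>R u1) \<bullet> (w' - c *\<^sub>R u1) = 0" "(w' - c *\<^sub>R u2) \<bullet> (w' - c *\<^sub>R u2) = 0"
      using uu cc w'u by (simp_all add: c_def inner_diff_left inner_diff_right inner_commute[of u1 w']
          inner_commute[of u2 w'])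
    then have "c *\<^sub>R u1 = c *\<^sub>R u2" and "c \<noteq> 0"
      using \<open>w' \<noteq> 0\<close> by auto
    then show False
      using \<open>u1 \<noteq> u2\<close> by simp
  qed
  ultimately show ?thesis
    by blast
qed

lemma exists_minkowski_eq_non_null:
  fixes p1 p2 p3 :: "real^'n::{finite,linorder}"
  assumes n4: "CARD('n) \<ge> 4" and Q: "p1 \<in> Qset" "p2 \<in> Qset" "p3 \<in> Qset"
    and ne: "p1 \<noteq> p2" "p1 \<noteq> p3" "p2 \<noteq> p3"
  shows "\<exists>y. minkowski y p1 = l1 \<and> minkowski y p2 = l2 \<and> minkowski y p3 = l3 \<and> qf y \<noteq> 0"
proof -
  obtain y0 where y0: "minkowski y0 p1 = l1" "minkowski y0 p2 = l2" "minkowski y0 p3 = l3"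
    using exists_minkowski_eq[OF Q ne] by blast
  obtain w where w: "minkowski w p1 = 0" "minkowski w p2 = 0" "minkowski w p3 = 0" "qf w \<noteq> 0"
    using exists_minkowski_orthogonal_non_null[OF n4 Q ne(1)] by blast
  have qs: "qf (y0 + s *\<^sub>R w) = qf y0 + 2 * s * minkowski y0 w + s\<^sup>2 * qf w" for s
    by (simp add: qf_add qf_scaleR minkowski_scaleR_right)
  obtain s where "qf (y0 + s *\<^sub>R w) \<noteq> 0"
  proof (rule ccontr)
    assume "\<not> thesis"
    then have "qf (y0 + s *\<^sub>R w) = 0" for s
      using that by blast
    from this[of 0] this[of 1] this[of 2] show False
      using w(4) unfolding qs by simp
  qed
  then show ?thesis
    using y0 w by (intro exI[of _ "y0 + s *\<^sub>R w"]) (simp add: minkowski_add_left minkowski_scaleR_left)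
qed

definition ray_param :: "real^'n::{finite,linorder} \<Rightarrow> real^'n::{finite,linorder} \<Rightarrow> real" where
  "ray_param p z = qf z / (2 * minkowski z p)"

lemma coherent_ray_param:
  assumes "p \<in> Qset" "minkowski z p \<noteq> 0"
  shows "qf (z - ray_param p z *\<^sub>R p) = 0"
  using assms by (simp add: ray_param_def qf_diff qf_scaleR qf_Qset minkowski_scaleR_right)

lemma exists_ray_param_eq:
  fixes p1 p2 p3 :: "real^'n::{finite,linorder}"
  assumes "CARD('n) \<ge> 4" "p1 \<in> Qset" "p2 \<in> Qset" "p3 \<in> Qset" "p1 \<noteq> p2" "p1 \<noteq> p3" "p2 \<noteq> p3"
    and "\<alpha> \<noteq> 0" "\<beta> \<noteq> 0" "\<gamma> \<noteq> 0"
  shows "\<exists>x. minkowski x p1 \<noteq> 0 \<and> minkowski x p2 \<noteq> 0 \<and> minkowski x p3 \<noteq> 0 \<and>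
    ray_param p1 x = \<alpha> \<and> ray_param p2 x = \<beta> \<and> ray_param p3 x = \<gamma>"
proof -
  obtain y where y: "minkowski y p1 = 1 / (2 * \<alpha>)" "minkowski y p2 = 1 / (2 * \<beta>)"
      "minkowski y p3 = 1 / (2 * \<gamma>)" "qf y \<noteq> 0"
    using exists_minkowski_eq_non_null[OF assms(1-7)] by blast
  \<comment> \<open>rescaling \<open>y\<close> by \<open>1 / qf y\<close> turns \<open>minkowski y p\<^sub>i = 1 / (2 \<alpha>\<^sub>i)\<close> into \<open>ray_param p\<^sub>i = \<alpha>\<^sub>i\<close>\<close>
  show ?thesis
    using y assms(8-10)
    by (intro exI[of _ "(1 / qf y) *\<^sub>R y"])
      (simp add: ray_param_def qf_scaleR minkowski_scaleR_left power2_eq_square)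
qed

lemma isCont_eventually_ne:
  fixes f :: "'a::t2_space \<Rightarrow> 'b::t1_space"
  assumes "isCont f x" "f x \<noteq> c"
  shows "\<forall>\<^sub>F z in nhds x. f z \<noteq> c"
  using assms tendsto_imp_eventually_ne[of f "f x" "at x" c]
  by (simp add: eventually_nhds_conv_at isCont_def)

lemma isCont_eq_const_punctured:
  fixes f :: "'a::{perfect_space,t2_space} \<Rightarrow> 'b::t2_space"
  assumes "isCont f a" "\<And>x. x \<noteq> a \<Longrightarrow> f x = c"
  shows "f a = c"
proof (rule LIM_unique)
  show "f \<midarrow>a\<rightarrow> f a"
    using assms(1) by (simp add: isCont_def)
  have "\<forall>\<^sub>F x in at a. c = f x"
    by (simp add: eventually_at_filter assms(2))
  then show "f \<midarrow>a\<rightarrow> c"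
    by (rule Lim_transform_eventually[OF tendsto_const])
qed

locale nondegenerate_preserver =
  fixes \<phi> :: "real^'n::{finite,linorder} \<Rightarrow> real^'n::{finite,linorder}"
  assumes continuous: "continuous_on UNIV \<phi>"
    and preserver: "coherency_preserver \<phi>"
    and nondegenerate: "\<not> degenerate \<phi>"
    and phi_0: "\<phi> 0 = 0"
begin

definition ray_scale :: "real^'n::{finite,linorder} \<Rightarrow> real \<Rightarrow> real" where
  "ray_scale p t = \<phi> (t *\<^sub>R p) $ tidx"

lemma isCont_phi [continuous_intros]:
  fixes g :: "'a::t2_space \<Rightarrow> real^'n::{finite,linorder}"
  assumes "isCont g x"
  shows "isCont (\<lambda>y. \<phi> (g y)) x"
  using continuous by (intro isCont_o2[OF assms]) (simp add: continuous_on_eq_continuous_at)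

lemma isCont_ray_scale [continuous_intros]:
  fixes g :: "'a::t2_space \<Rightarrow> real"
  shows "isCont g x \<Longrightarrow> isCont (\<lambda>y. ray_scale p (g y)) x"
  unfolding ray_scale_def by (intro continuous_intros)

lemma coherent_phi: "qf (b - a) = 0 \<Longrightarrow> qf (\<phi> b - \<phi> a) = 0"
  using preserver by (auto simp: coherency_preserver_def)

lemma qf_phi_ray: "p \<in> Qset \<Longrightarrow> qf (\<phi> (t *\<^sub>R p)) = 0"
  using coherent_phi[of "t *\<^sub>R p" 0] by (simp add: qf_scaleR qf_Qset phi_0)

lemma minkowski_phi_ray:
  assumes "p \<in> Qset"
  shows "minkowski (\<phi> (s *\<^sub>R p)) (\<phi> (t *\<^sub>R p)) = 0"
proof -
  have "qf (t *\<^sub>R p - s *\<^sub>R p) = 0"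
    using assms by (simp add: scaleR_diff_left[symmetric] qf_scaleR qf_Qset del: scaleR_diff_left)
  then have "qf (\<phi> (t *\<^sub>R p) - \<phi> (s *\<^sub>R p)) = 0"
    by (rule coherent_phi)
  then show ?thesis
    using qf_phi_ray[OF assms, of s] qf_phi_ray[OF assms, of t]
    by (simp add: qf_diff minkowski_commute[of "\<phi> (t *\<^sub>R p)"])
qed

lemma phi_ray_nonzero:
  assumes p: "p \<in> Qset"
  shows "\<exists>t. \<phi> (t *\<^sub>R p) \<noteq> 0"
proof (rule ccontr)
  assume "\<not> ?thesis"
  then have ray: "\<phi> (t *\<^sub>R p) = 0" for t
    by simp
  have off_hyperplane: "qf (\<phi> z) = 0" if "minkowski z p \<noteq> 0" for z
    using coherent_phi[OF coherent_ray_param[OF p that]] ray by simp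
  have "qf (\<phi> x) = 0" for x
  proof (cases "minkowski x p = 0")
    case True
    \<comment> \<open>move off the hyperplane \<open>minkowski x p = 0\<close> along the time axis\<close>
    have "minkowski (x + t *\<^sub>R time_axis) p = t" for t
      using True p by (simp add: minkowski_add_left minkowski_scaleR_left minkowski_time_axis_left Qset_iff)
    then have "qf (\<phi> (x + t *\<^sub>R time_axis)) = 0" if "t \<noteq> 0" for t
      using off_hyperplane[of "x + t *\<^sub>R time_axis"] that by simp
    moreover have "isCont (\<lambda>t. qf (\<phi> (x + t *\<^sub>R time_axis))) 0"
      by (intro continuous_intros)
    ultimately have "qf (\<phi> (x + 0 *\<^sub>R time_axis)) = 0"
      using isCont_eq_const_punctured by blast
    then show ?thesis
      by simp
  qed (rule off_hyperplane)
  then have "range \<phi> \<subseteq> lightcone 0"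
    by (auto simp: lightcone_def)
  then show False
    using nondegenerate by (auto simp: degenerate_def)
qed

text \<open>A single nonzero value \<open>\<phi>(t\<^sub>0 p)\<close> determines \<open>\<phi>\<^sub>0(p)\<close>, since the whole image of the ray
  lies on one null line.\<close>

lemma varphi_eq:
  assumes p: "p \<in> Qset" and nz: "\<phi> (t0 *\<^sub>R p) \<noteq> 0"
  shows "varphi \<phi> 0 p = (1 / ray_scale p t0) *\<^sub>R \<phi> (t0 *\<^sub>R p)"
    and "varphi \<phi> 0 p \<in> Qset"
    and "\<phi> (t *\<^sub>R p) = ray_scale p t *\<^sub>R varphi \<phi> 0 p"
proof -
  define u where "u = \<phi> (t0 *\<^sub>R p)"
  define a where "a = u $ tidx"
  define r where "r = (1 / a) *\<^sub>R u"
  have qu: "qf u = 0"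
    using qf_phi_ray[OF p] by (simp add: u_def)
  have "a \<noteq> 0"
    using null_tidx_nonzero[OF qu] nz by (simp add: a_def u_def)
  have rQ: "r \<in> Qset"
    using qu \<open>a \<noteq> 0\<close> by (intro Qset_if_qf_eq_0) (simp_all add: r_def qf_scaleR a_def)
  have ray: "\<phi> (t *\<^sub>R p) = ray_scale p t *\<^sub>R r" for t
  proof -
    have "ray_scale p t *\<^sub>R u = a *\<^sub>R \<phi> (t *\<^sub>R p)"
      using null_orthogonal_parallel[OF qf_phi_ray[OF p, of t0] qf_phi_ray[OF p, of t]
          minkowski_phi_ray[OF p, of t0 t]]
      by (simp add: a_def u_def ray_scale_def)
    then have "\<phi> (t *\<^sub>R p) = (1 / a) *\<^sub>R (ray_scale p t *\<^sub>R u)"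
      using \<open>a \<noteq> 0\<close> by simp
    then show ?thesis
      by (simp add: r_def)
  qed
  have "varphi \<phi> 0 p = r"
    unfolding varphi_def
  proof (rule the_equality)
    show "r \<in> Qset \<and> (\<forall>t. \<exists>s. \<phi> (0 + t *\<^sub>R p) = \<phi> 0 + s *\<^sub>R r)"
      using rQ ray by (auto simp: phi_0)
  next
    fix p' assume p': "p' \<in> Qset \<and> (\<forall>t. \<exists>s. \<phi> (0 + t *\<^sub>R p) = \<phi> 0 + s *\<^sub>R p')"
    then obtain s where s: "u = s *\<^sub>R p'"
      by (auto simp: phi_0 u_def)
    then have "s = a"
      using p' by (simp add: a_def Qset_iff)
    then show "p' = r"
      using s \<open>a \<noteq> 0\<close> by (simp add: r_def)
  qed
  then show "varphi \<phi> 0 p = (1 / ray_scale p t0) *\<^sub>R \<phi> (t0 *\<^sub>R p)" "varphi \<phi> 0 p \<in> Qset"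
    "\<phi> (t *\<^sub>R p) = ray_scale p t *\<^sub>R varphi \<phi> 0 p"
    using rQ ray[of t] by (simp_all add: r_def a_def u_def ray_scale_def[of p t0])
qed

lemma varphi_Qset: "p \<in> Qset \<Longrightarrow> varphi \<phi> 0 p \<in> Qset"
  using phi_ray_nonzero varphi_eq(2) by blast

lemma phi_ray: "p \<in> Qset \<Longrightarrow> \<phi> (t *\<^sub>R p) = ray_scale p t *\<^sub>R varphi \<phi> 0 p"
  using phi_ray_nonzero varphi_eq(3) by blast

lemma ray_scale_0 [simp]: "ray_scale p 0 = 0"
  by (simp add: ray_scale_def phi_0)

lemma continuous_on_varphi: "continuous_on Qset (varphi \<phi> 0)"
  unfolding continuous_on_eq_continuous_within
proof
  fix p0 :: "real^'n::{finite,linorder}"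
  assume p0: "p0 \<in> Qset"
  obtain t0 where "\<phi> (t0 *\<^sub>R p0) \<noteq> 0"
    using phi_ray_nonzero[OF p0] by blast
  then have "ray_scale p0 t0 \<noteq> 0"
    using phi_ray[OF p0, of t0] by auto
  define G where "G p = (1 / ray_scale p t0) *\<^sub>R \<phi> (t0 *\<^sub>R p)" for p
  have "isCont (\<lambda>p. ray_scale p t0) p0"
    unfolding ray_scale_def by (intro continuous_intros)
  then have "isCont G p0"
    unfolding G_def using \<open>ray_scale p0 t0 \<noteq> 0\<close> by (intro continuous_intros) auto
  then have "(G \<longlongrightarrow> G p0) (at p0 within Qset)"
    by (simp add: continuous_within[symmetric] continuous_at_imp_continuous_at_within)
  moreover have "\<forall>\<^sub>F p in nhds p0. ray_scale p t0 \<noteq> 0"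
    by (rule isCont_eventually_ne) fact+
  then have "\<forall>\<^sub>F p in at p0 within Qset. G p = varphi \<phi> 0 p"
    unfolding eventually_at_filter
  proof (rule eventually_mono, intro impI)
    fix p assume "ray_scale p t0 \<noteq> 0" "p \<in> Qset"
    moreover from this(1) have "\<phi> (t0 *\<^sub>R p) \<noteq> 0"
      by (auto simp: ray_scale_def)
    ultimately show "G p = varphi \<phi> 0 p"
      using varphi_eq(1)[of p t0] by (simp add: G_def)
  qed
  ultimately have "(varphi \<phi> 0 \<longlongrightarrow> G p0) (at p0 within Qset)"
    by (rule Lim_transform_eventually)
  moreover have "G p0 = varphi \<phi> 0 p0"
    using varphi_eq(1)[OF p0 \<open>\<phi> (t0 *\<^sub>R p0) \<noteq> 0\<close>] by (simp add: G_def ray_scale_def)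
  ultimately show "continuous (at p0 within Qset) (varphi \<phi> 0)"
    by (simp add: continuous_within)
qed

lemma phi_coherent_ray_param:
  assumes "p \<in> Qset" "minkowski z p \<noteq> 0"
  shows "qf (\<phi> z - ray_scale p (ray_param p z) *\<^sub>R varphi \<phi> 0 p) = 0"
  using coherent_phi[OF coherent_ray_param[OF assms]] phi_ray[OF assms(1)] by simp

lemma phi_eq_0_if_ray_scale_ne:
  assumes Q: "p1 \<in> Qset" "p2 \<in> Qset" "p3 \<in> Qset"
    and eq: "varphi \<phi> 0 p1 = varphi \<phi> 0 p2" and ne: "varphi \<phi> 0 p1 \<noteq> varphi \<phi> 0 p3"
    and z: "minkowski z p1 \<noteq> 0" "minkowski z p2 \<noteq> 0" "minkowski z p3 \<noteq> 0"
    and "ray_scale p1 (ray_param p1 z) \<noteq> ray_scale p2 (ray_param p2 z)"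
    and "ray_scale p3 (ray_param p3 z) \<noteq> 0"
  shows "\<phi> z = 0"
proof (rule coherent_null_lines_eq_0)
  show "qf (\<phi> z - ray_scale p1 (ray_param p1 z) *\<^sub>R varphi \<phi> 0 p1) = 0"
    "qf (\<phi> z - ray_scale p2 (ray_param p2 z) *\<^sub>R varphi \<phi> 0 p1) = 0"
    "qf (\<phi> z - ray_scale p3 (ray_param p3 z) *\<^sub>R varphi \<phi> 0 p3) = 0"
    using phi_coherent_ray_param[OF Q(1) z(1)] phi_coherent_ray_param[OF Q(2) z(2)]
      phi_coherent_ray_param[OF Q(3) z(3)] eq by simp_all
qed (use assms varphi_Qset in auto)

lemma ray_scale_eq_if_varphi_eq:
  assumes n4: "CARD('n) \<ge> 4" and gen: "generic \<phi> 0"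
    and Q: "p1 \<in> Qset" "p2 \<in> Qset" "p3 \<in> Qset" and "p1 \<noteq> p2"
    and eq: "varphi \<phi> 0 p1 = varphi \<phi> 0 p2" and ne: "varphi \<phi> 0 p1 \<noteq> varphi \<phi> 0 p3"
    and "\<alpha> \<noteq> 0" "\<beta> \<noteq> 0"
  shows "ray_scale p1 \<alpha> = ray_scale p2 \<beta>"
proof (rule ccontr)
  assume "ray_scale p1 \<alpha> \<noteq> ray_scale p2 \<beta>"
  obtain \<gamma> where "\<phi> (\<gamma> *\<^sub>R p3) \<noteq> 0"
    using phi_ray_nonzero[OF Q(3)] by blast
  then have "ray_scale p3 \<gamma> \<noteq> 0" "\<gamma> \<noteq> 0"
    using phi_ray[OF Q(3), of \<gamma>] phi_0 by auto
  have "p1 \<noteq> p3" "p2 \<noteq> p3"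
    using ne eq by auto
  then obtain x where x: "minkowski x p1 \<noteq> 0" "minkowski x p2 \<noteq> 0" "minkowski x p3 \<noteq> 0"
      "ray_param p1 x = \<alpha>" "ray_param p2 x = \<beta>" "ray_param p3 x = \<gamma>"
    using exists_ray_param_eq[OF n4 Q \<open>p1 \<noteq> p2\<close>] \<open>\<alpha> \<noteq> 0\<close> \<open>\<beta> \<noteq> 0\<close> \<open>\<gamma> \<noteq> 0\<close> by metis
  define h where "h p z = ray_scale p (ray_param p z)" for p z
  have cont_h: "isCont (h p) x" if "minkowski x p \<noteq> 0" for p
    unfolding h_def ray_param_def using that by (intro continuous_intros) auto
  have "\<forall>\<^sub>F z in nhds x. (minkowski z p1 \<noteq> 0 \<and> minkowski z p2 \<noteq> 0 \<and> minkowski z p3 \<noteq> 0)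
      \<and> h p1 z - h p2 z \<noteq> 0 \<and> h p3 z \<noteq> 0"
    using x \<open>ray_scale p1 \<alpha> \<noteq> ray_scale p2 \<beta>\<close> \<open>ray_scale p3 \<gamma> \<noteq> 0\<close>
    by (intro eventually_conj isCont_eventually_ne continuous_intros cont_h) (simp_all add: h_def)
  then obtain S where "open S" "x \<in> S"
    and S: "\<And>z. z \<in> S \<Longrightarrow> (minkowski z p1 \<noteq> 0 \<and> minkowski z p2 \<noteq> 0 \<and> minkowski z p3 \<noteq> 0)
      \<and> h p1 z \<noteq> h p2 z \<and> h p3 z \<noteq> 0"
    unfolding eventually_nhds by auto
  have "S \<subseteq> \<phi> -` {0}"
    using S phi_eq_0_if_ray_scale_ne[OF Q eq ne] by (auto simp: h_def)
  then have "x \<in> interior (\<phi> -` {0})"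
    using \<open>open S\<close> \<open>x \<in> S\<close> interior_maximal by blast
  then show False
    using gen phi_0 by (auto simp: generic_def Wset_def)
qed

lemma inj_on_varphi:
  assumes n4: "CARD('n) \<ge> 4" and gen: "generic \<phi> 0"
    and nonconst: "\<exists>p1\<in>Qset. \<exists>p2\<in>Qset. varphi \<phi> 0 p1 \<noteq> varphi \<phi> 0 p2"
  shows "inj_on (varphi \<phi> 0) Qset"
proof (rule inj_onI, rule ccontr)
  fix p1 p2
  assume Q: "p1 \<in> Qset" "p2 \<in> Qset" and eq: "varphi \<phi> 0 p1 = varphi \<phi> 0 p2" and "p1 \<noteq> p2"
  obtain p3 where p3: "p3 \<in> Qset" "varphi \<phi> 0 p1 \<noteq> varphi \<phi> 0 p3"
    using nonconst by metis
  have const: "ray_scale p1 \<alpha> = ray_scale p2 1" if "\<alpha> \<noteq> 0" for \<alpha>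
    using ray_scale_eq_if_varphi_eq[OF n4 gen Q p3(1) \<open>p1 \<noteq> p2\<close> eq p3(2) that] by simp
  have "isCont (\<lambda>t. ray_scale p1 t) 0"
    by (intro continuous_intros)
  then have "ray_scale p1 0 = ray_scale p2 1"
    using isCont_eq_const_punctured const by blast
  with const have "ray_scale p1 t = 0" for t
    by (cases "t = 0") simp_all
  then have "\<phi> (t *\<^sub>R p1) = 0" for t
    using phi_ray[OF Q(1)] by simp
  then show False
    using phi_ray_nonzero[OF Q(1)] by blast
qed

end

text \<open>Invariance of domain: an injective continuous map of the sphere \<open>rel_frontier U\<close>
  into itself that misses a point would embed the sphere into the punctured sphere, which is
  homeomorphic to an affine space of the same dimension; the image would be open, closed and
  bounded there, which is impossible.\<close>

lemma inj_self_map_rel_frontier_surj: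
  fixes f :: "'a::euclidean_space \<Rightarrow> 'a"
  assumes U: "convex U" "bounded U" "aff_dim U \<ge> 2"
    and contf: "continuous_on (rel_frontier U) f" and injf: "inj_on f (rel_frontier U)"
    and fim: "f ` rel_frontier U \<subseteq> rel_frontier U"
  shows "f ` rel_frontier U = rel_frontier U"
proof (rule ccontr)
  define S where "S = rel_frontier U"
  assume "f ` rel_frontier U \<noteq> rel_frontier U"
  then obtain z where "z \<in> S" "z \<notin> f ` S"
    using fim by (auto simp: S_def)
  have "- 1 \<le> aff_dim U - 1" "aff_dim U - 1 \<le> aff_dim (UNIV :: 'a set)"
    using U(3) aff_dim_le_DIM[of U] by simp_all
  then obtain T :: "'a set" where "affine T" "aff_dim T = aff_dim U - 1"
    using choose_affine_subset[OF affine_UNIV] by metis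
  then have "S - {z} homeomorphic T"
    unfolding S_def
    by (intro homeomorphic_punctured_sphere_affine_gen[OF U(1,2)]) (use \<open>z \<in> S\<close> in \<open>simp_all add: S_def\<close>)
  then obtain h k where hk: "homeomorphism (S - {z}) T h k"
    by (auto simp: homeomorphic_def)
  have fim': "f ` S \<subseteq> S - {z}"
    using fim \<open>z \<notin> f ` S\<close> by (auto simp: S_def)
  have contg: "continuous_on S (h \<circ> f)"
    using contf fim' homeomorphism_cont1[OF hk]
    by (intro continuous_on_compose) (auto simp: S_def elim: continuous_on_subset)
  have injg: "inj_on (h \<circ> f) S"
    using injf fim' homeomorphism_apply1[OF hk]
    by (intro comp_inj_on) (auto simp: S_def intro: inj_on_inverseI[where g = k])
  have gim: "(h \<circ> f) ` S \<subseteq> T"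
    using fim' homeomorphism_image1[OF hk] by auto
  have "openin (top_of_set T) ((h \<circ> f) ` S)"
    by (rule invariance_of_domain_sphere_affine_set_gen[OF contg injg _ U(2,1) \<open>affine T\<close>])
      (use gim \<open>aff_dim T = aff_dim U - 1\<close> in \<open>auto simp: S_def\<close>)
  moreover have "compact ((h \<circ> f) ` S)"
    using compact_continuous_image[OF contg] U(2) by (simp add: S_def compact_rel_frontier_bounded)
  then have "closedin (top_of_set T) ((h \<circ> f) ` S)"
    using gim by (intro closed_subset compact_imp_closed)
  moreover have "connected T"
    using \<open>affine T\<close> by (simp add: affine_imp_convex convex_connected)
  ultimately have "(h \<circ> f) ` S = T"
    using \<open>z \<in> S\<close> unfolding connected_clopen by blast
  then have "bounded T"
    using \<open>compact ((h \<circ> f) ` S)\<close> compact_imp_bounded by auto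
  then have "aff_dim T \<le> 0"
    using affine_bounded_eq_trivial[OF \<open>affine T\<close>] by auto
  then show False
    using \<open>aff_dim T = aff_dim U - 1\<close> U(3) by simp
qed

definition Qdisc :: "(real^'n::{finite,linorder}) set" where
  "Qdisc = cball time_axis 1 \<inter> {x. time_axis \<bullet> x = 1}"

lemma Qset_eq_rel_frontier: "Qset = rel_frontier Qdisc"
proof -
  have rf: "rel_frontier Qdisc = frontier (cball time_axis 1) \<inter> {x. time_axis \<bullet> x = 1}"
    unfolding Qdisc_def
  proof (rule convex_affine_rel_frontier_Int)
    have "time_axis \<in> interior (cball time_axis 1) \<inter> {x. time_axis \<bullet> x = 1}"
      by (simp add: inner_time_axis)
    then show "interior (cball time_axis 1) \<inter> {x. time_axis \<bullet> x = 1} \<noteq> {}"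
      by blast
  qed (simp_all add: affine_hyperplane)
  have sphere: "x \<in> sphere time_axis 1 \<longleftrightarrow> spatial x \<bullet> spatial x = 1"
    if "x $ tidx = 1" for x :: "real^'n::{finite,linorder}"
  proof -
    have "x - time_axis = spatial x"
      using spatial_decomp[of x] that by (simp add: algebra_simps)
    then have "dist time_axis x = norm (spatial x)"
      by (metis dist_commute dist_norm)
    then show ?thesis
      by (simp add: norm_eq_1)
  qed
  show ?thesis
    unfolding rf by (auto simp: Qset_iff inner_commute[of time_axis] inner_time_axis sphere[unfolded mem_sphere])
qed

lemma aff_dim_Qdisc: "aff_dim (Qdisc :: (real^'n::{finite,linorder}) set) = int CARD('n) - 1"
proof -
  define H :: "(real^'n::{finite,linorder}) set" where "H = {x. time_axis \<bullet> x = 1}"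
  have "time_axis \<in> H \<inter> interior (cball time_axis 1)"
    by (simp add: H_def inner_time_axis)
  then have "aff_dim (H \<inter> cball time_axis 1) = aff_dim H"
    by (intro aff_dim_convex_Int_nonempty_interior) (auto simp: H_def convex_hyperplane)
  moreover have "aff_dim H = int DIM(real^'n::{finite,linorder}) - 1"
    using aff_dim_hyperplane[of time_axis 1] by (simp add: H_def time_axis_def)
  ultimately show ?thesis
    by (simp add: Qdisc_def H_def Int_commute)
qed

theorem lemma4p7:
  fixes \<phi> :: "real^'n::{finite,linorder} \<Rightarrow> real^'n::{finite,linorder}"
  assumes "CARD('n) \<ge> 4"
    and "continuous_on UNIV \<phi>"
    and "coherency_preserver \<phi>"
    and "\<not> degenerate \<phi>"
    and "\<phi> 0 = 0"
    and "\<exists>p1\<in>Qset. \<exists>p2\<in>Qset. varphi \<phi> 0 p1 \<noteq> varphi \<phi> 0 p2"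
    and "generic \<phi> 0"
  shows "\<exists>g. homeomorphism Qset Qset (varphi \<phi> 0) g"
proof -
  interpret nondegenerate_preserver \<phi>
    using assms(2-5) by unfold_locales
  have inj: "inj_on (varphi \<phi> 0) Qset"
    using inj_on_varphi assms(1,6,7) by blast
  have U: "convex Qdisc" "bounded (Qdisc :: (real^'n::{finite,linorder}) set)"
    by (simp_all add: Qdisc_def convex_Int convex_hyperplane bounded_Int)
  have "aff_dim (Qdisc :: (real^'n::{finite,linorder}) set) \<ge> 2"
    using assms(1) by (simp add: aff_dim_Qdisc)
  from inj_self_map_rel_frontier_surj[OF U this, folded Qset_eq_rel_frontier]
  have surj: "varphi \<phi> 0 ` Qset = Qset"
    using continuous_on_varphi inj varphi_Qset by blast
  have "compact (Qset :: (real^'n::{finite,linorder}) set)"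
    using U(2) by (simp add: Qset_eq_rel_frontier compact_rel_frontier_bounded)
  then show ?thesis
    by (rule homeomorphism_compact[OF _ continuous_on_varphi surj inj])
qed

end
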